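(* For all integers $m\geq 2$ and every $\lambda>-\frac12$, $$\frac{(m-1)m^2(m+1)(m+\lambda)^2(m+\lambda+1)^2}{2(2\lambda+1)(2\lambda+5)}\leq A_{2,m}\leq\frac{(m-1)m(m+1)^2(m+\lambda)^2(m+\lambda+1)(m+\lambda+2)}{2(2\lambda+1)(2\lambda+5)}.$$
   Context: Fix $\lambda>-1/2$. Define polynomials $Q_m$ by $Q_0=1$, $Q_1(\mu)=1-\frac{2(\lambda+1)(\lambda+2)}{2\lambda+1}\mu$ and, for $m\geq2$, $$Q_m-Q_{m-1}=\frac{m(2m-1)(2m+\lambda)}{(m-1+\lambda)(2m-2+\lambda)(2m-1+2\lambda)}\big[Q_{m-1}-Q_{m-2}\big]-\frac{2m(2m-1+\lambda)(2m+\lambda)}{2m-1+2\lambda}\,\mu\,Q_{m-1}(\mu).$$ Write $Q_m(\mu)=\sum_{i=0}^m(-1)^iA_{i,m}\mu^i$; thus $A_{2,m}$ is the coefficient of $\mu^2$ in $Q_m$. *)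

theory Defs
  imports "HOL-Computational_Algebra.Polynomial"
begin

text \<open>The polynomials Q_m(mu) (in the variable mu) depending on the parameter lambda.
  Q l m is Q_m for lambda = l.\<close>
fun Q :: "real \<Rightarrow> nat \<Rightarrow> real poly" where
  "Q l 0 = 1"
| "Q l (Suc 0) = [:1, - (2 * (l + 1) * (l + 2) / (2 * l + 1)):]"
| "Q l (Suc (Suc n)) =
     (let m = real (Suc (Suc n)) in
      Q l (Suc n)
      + smult (m * (2*m - 1) * (2*m + l) / ((m - 1 + l) * (2*m - 2 + l) * (2*m - 1 + 2*l)))
              (Q l (Suc n) - Q l n)
      - smult (2 * m * (2*m - 1 + l) * (2*m + l) / (2*m - 1 + 2*l)) (pCons 0 (Q l (Suc n))))"

definition A :: "real \<Rightarrow> nat \<Rightarrow> nat \<Rightarrow> real" where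
  "A l i m = (-1) ^ i * coeff (Q l m) i"

end

theory Submission
  imports Defs
begin

text \<open>Comparing coefficients in the recurrence defining \<open>Q\<^sub>m\<close> shows that \<open>A\<^sub>i\<^sub>,\<^sub>m\<close> satisfies,
  in \<open>m\<close>, the same three-term recurrence with inhomogeneity proportional to \<open>A\<^sub>i\<^sub>-\<^sub>1\<^sub>,\<^sub>m\<^sub>-\<^sub>1\<close>.
  This determines closed forms: \<open>A\<^sub>1\<^sub>,\<^sub>m = m(m+1)(m+\<lambda>)(m+\<lambda>+1)/(2\<lambda>+1)\<close>, and
  \<open>A\<^sub>2\<^sub>,\<^sub>m\<close> is \<open>(m-1)m(m+1)(m+\<lambda>)(m+\<lambda>+1)\<close> times an explicit cubic in \<open>m\<close>, divided by
  \<open>6(2\<lambda>+1)(2\<lambda>+3)(2\<lambda>+5)\<close>; after clearing denominators, checking them against the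
  recurrence is a polynomial identity. The bounds then amount to sandwiching the cubic between
  \<open>3(2\<lambda>+3)m(m+\<lambda>)(m+\<lambda>+1)\<close> and \<open>3(2\<lambda>+3)(m+1)(m+\<lambda>)(m+\<lambda>+2)\<close> for \<open>m \<ge> 2\<close>.\<close>

definition rec_c :: "real \<Rightarrow> real \<Rightarrow> real" where
  "rec_c l m = m * (2*m - 1) * (2*m + l) / ((m - 1 + l) * (2*m - 2 + l) * (2*m - 1 + 2*l))"

definition rec_d :: "real \<Rightarrow> real \<Rightarrow> real" where
  "rec_d l m = 2 * m * (2*m - 1 + l) * (2*m + l) / (2*m - 1 + 2*l)"

lemma Q_Suc_Suc:
  "Q l (Suc (Suc n)) = Q l (Suc n) + smult (rec_c l (real (Suc (Suc n)))) (Q l (Suc n) - Q l n)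
     - smult (rec_d l (real (Suc (Suc n)))) (pCons 0 (Q l (Suc n)))"
  unfolding rec_c_def rec_d_def by (simp only: Q.simps Let_def)

lemma coeff_Q_0: "coeff (Q l n) 0 = 1"
  by (induction l n rule: Q.induct) (simp_all add: Let_def)

lemma A_0: "A l 0 m = 1"
  by (simp add: A_def coeff_Q_0)

lemma A_Suc_Suc:
  "A l (Suc i) (Suc (Suc n)) = A l (Suc i) (Suc n)
    + rec_c l (real (Suc (Suc n))) * (A l (Suc i) (Suc n) - A l (Suc i) n)
    + rec_d l (real (Suc (Suc n))) * A l i (Suc n)"
  unfolding A_def Q_Suc_Suc by (simp add: algebra_simps)

lemma solve_scaled_recurrence:
  fixes D E F K P R u v w y z :: real
  assumes "D * (u - v) = P * (v - w) + R * F * y" and "D = F * E" and "y = z * K"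
    and "F \<noteq> 0" "E \<noteq> 0" "K \<noteq> 0"
  shows "u / K = v / K + P / D * (v / K - w / K) + R / E * z"
proof -
  have "u = v + P / D * (v - w) + R / E * y"
    using assms(1,2,4,5) by (simp add: field_simps)
  then show ?thesis
    using assms(2-6) by (simp add: field_simps)
qed

definition A1_num :: "real \<Rightarrow> real \<Rightarrow> real" where
  "A1_num l x = x * (x + 1) * (x + l) * (x + l + 1)"

definition A2_cubic :: "real \<Rightarrow> real \<Rightarrow> real" where
  "A2_cubic l x = 3*(2*l+3) * (x^3 + (2*l+3)*x^2) + (6*l^3+31*l^2+41*l+4)*x + (4*l^3+10*l^2-10*l-28)"

definition A2_num :: "real \<Rightarrow> real \<Rightarrow> real" where
  "A2_num l x = (x - 1) * x * (x + 1) * (x + l) * (x + l + 1) * A2_cubic l x"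

definition A1 :: "real \<Rightarrow> real \<Rightarrow> real" where
  "A1 l x = A1_num l x / (2*l + 1)"

definition A2 :: "real \<Rightarrow> real \<Rightarrow> real" where
  "A2 l x = A2_num l x / (6 * (2*l + 1) * (2*l + 3) * (2*l + 5))"

lemma A1_num_recurrence:
  "(m-1+l) * (2*m-2+l) * (2*m-1+2*l) * (A1_num l m - A1_num l (m-1))
   = m * (2*m-1) * (2*m+l) * (A1_num l (m-1) - A1_num l (m-2))
     + 2*m*(2*m-1+l)*(2*m+l) * ((m-1+l) * (2*m-2+l)) * (2*l+1)"
  unfolding A1_num_def by algebra

lemma A2_num_recurrence:
  "(m-1+l) * (2*m-2+l) * (2*m-1+2*l) * (A2_num l m - A2_num l (m-1))
   = m * (2*m-1) * (2*m+l) * (A2_num l (m-1) - A2_num l (m-2))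
     + 2*m*(2*m-1+l)*(2*m+l) * ((m-1+l) * (2*m-2+l)) * (6*(2*l+3)*(2*l+5) * A1_num l (m-1))"
  unfolding A1_num_def A2_num_def A2_cubic_def by algebra

lemma
  assumes "l > -1/2" and "m \<ge> 2"
  shows A1_recurrence: "A1 l m = A1 l (m-1) + rec_c l m * (A1 l (m-1) - A1 l (m-2)) + rec_d l m"
    and A2_recurrence: "A2 l m = A2 l (m-1) + rec_c l m * (A2 l (m-1) - A2 l (m-2)) + rec_d l m * A1 l (m-1)"
proof -
  have pos: "m-1+l > 0" "2*m-2+l > 0" "2*m-1+2*l > 0" "2*l+1 > 0" "2*l+3 > 0" "2*l+5 > 0"
    using assms by auto
  have "A1 l m = A1 l (m-1) + rec_c l m * (A1 l (m-1) - A1 l (m-2)) + rec_d l m * 1"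
    unfolding A1_def rec_c_def rec_d_def
    by (rule solve_scaled_recurrence[OF A1_num_recurrence]) (use pos in auto)
  then show "A1 l m = A1 l (m-1) + rec_c l m * (A1 l (m-1) - A1 l (m-2)) + rec_d l m"
    by simp
  have y: "6*(2*l+3)*(2*l+5) * A1_num l (m-1) = A1 l (m-1) * (6 * (2*l + 1) * (2*l + 3) * (2*l + 5))"
  proof -
    have "A1_num l (m-1) = A1 l (m-1) * (2*l+1)"
      using pos(4) by (simp add: A1_def)
    then show ?thesis by algebra
  qed
  show "A2 l m = A2 l (m-1) + rec_c l m * (A2 l (m-1) - A2 l (m-2)) + rec_d l m * A1 l (m-1)"
    unfolding A2_def rec_c_def rec_d_def
    by (rule solve_scaled_recurrence[OF A2_num_recurrence _ y]) (use pos in simp_all)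
qed

lemma A_1_2_closed_form:
  assumes "l > -1/2"
  shows "A l 1 n = A1 l n \<and> A l 2 n = A2 l n"
proof (induction n rule: induct_nat_012)
  case 0
  show ?case by (simp add: A_def A1_def A1_num_def A2_def A2_num_def)
next
  case 1
  have "2*l + 1 \<noteq> 0" using assms by linarith
  then show ?case
    by (simp add: A_def A1_def A1_num_def A2_def A2_num_def A2_cubic_def field_simps numeral_2_eq_2)
next
  case (ge2 n)
  have m: "real (Suc (Suc n)) \<ge> 2" "real (Suc (Suc n)) - 1 = real (Suc n)" "real (Suc (Suc n)) - 2 = real n"
    by auto
  show ?case
    using A_Suc_Suc[of l 0 n] A_Suc_Suc[of l 1 n] ge2.IH A_0
      A1_recurrence[OF assms m(1)] A2_recurrence[OF assms m(1)]
    unfolding m(2,3) by (simp add: numeral_2_eq_2)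
qed

lemma A2_cubic_bounds:
  assumes "l > -1/2" and "x \<ge> 2"
  shows "3*(2*l+3) * (x * (x+l) * (x+l+1)) \<le> A2_cubic l x"
    and "A2_cubic l x \<le> 3*(2*l+3) * ((x+1) * (x+l) * (x+l+2))"
proof -
  define y where "y = l + 1/2"
  define t where "t = x - 2"
  have y: "y > 0" and t: "t \<ge> 0"
    using assms by (auto simp: y_def t_def)
  have "A2_cubic l x - 3*(2*l+3) * (x * (x+l) * (x+l+1))
      = 12*(y+1)*t^2 + (16*y^2+64*y+40)*t + (4*y^3+36*y^2+63*y+11)"
    unfolding A2_cubic_def y_def t_def by (simp add: algebra_simps power2_eq_square power3_eq_cube)
  also have "\<dots> \<ge> 0"
    using y t by (intro add_nonneg_nonneg mult_nonneg_nonneg) auto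
  finally show "3*(2*l+3) * (x * (x+l) * (x+l+1)) \<le> A2_cubic l x"
    by simp
  have "3*(2*l+3) * ((x+1) * (x+l) * (x+l+2)) - A2_cubic l x
      = ((4*y^2+10*y+22)*t + (4*y^3+24*y^2+57*y+77)) / 2"
    unfolding A2_cubic_def y_def t_def by (simp add: algebra_simps power2_eq_square power3_eq_cube)
  also have "\<dots> \<ge> 0"
    using y t by (intro divide_nonneg_nonneg add_nonneg_nonneg mult_nonneg_nonneg) auto
  finally show "A2_cubic l x \<le> 3*(2*l+3) * ((x+1) * (x+l) * (x+l+2))"
    by simp
qed

lemma A2_bounds:
  assumes "l > -1/2" and "x \<ge> 2"
  shows "(x - 1) * x^2 * (x + 1) * (x + l)^2 * (x + l + 1)^2 / (2 * (2*l + 1) * (2*l + 5)) \<le> A2 l x"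
    and "A2 l x \<le> (x - 1) * x * (x + 1)^2 * (x + l)^2 * (x + l + 1) * (x + l + 2) / (2 * (2*l + 1) * (2*l + 5))"
proof -
  define P where "P = (x - 1) * x * (x + 1) * (x + l) * (x + l + 1)"
  define G where "G = 3 * (2*l + 3)"
  define H where "H = 2 * (2*l + 1) * (2*l + 5)"
  have P: "P \<ge> 0" and G: "G > 0" and H: "H > 0"
    using assms unfolding P_def G_def H_def by (auto intro!: mult_nonneg_nonneg mult_pos_pos)
  have "6 * (2*l + 1) * (2*l + 3) * (2*l + 5) = G * H"
    unfolding G_def H_def by algebra
  then have A2_eq: "A2 l x = P * A2_cubic l x / (G * H)"
    unfolding A2_def A2_num_def P_def by simp
  have cancel: "P * a / H = P * (G * a) / (G * H)" for a
    using G by simp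
  have "P * (x * (x+l) * (x+l+1)) / H \<le> A2 l x"
    unfolding cancel A2_eq using P G H A2_cubic_bounds(1)[OF assms]
    by (intro divide_right_mono mult_left_mono) (auto simp: G_def)
  then show "(x - 1) * x^2 * (x + 1) * (x + l)^2 * (x + l + 1)^2 / (2 * (2*l + 1) * (2*l + 5)) \<le> A2 l x"
    unfolding P_def H_def by (simp add: power2_eq_square ac_simps)
  have "A2 l x \<le> P * ((x+1) * (x+l) * (x+l+2)) / H"
    unfolding cancel A2_eq using P G H A2_cubic_bounds(2)[OF assms]
    by (intro divide_right_mono mult_left_mono) (auto simp: G_def)
  then show "A2 l x \<le> (x - 1) * x * (x + 1)^2 * (x + l)^2 * (x + l + 1) * (x + l + 2) / (2 * (2*l + 1) * (2*l + 5))"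
    unfolding P_def H_def by (simp add: power2_eq_square ac_simps)
qed

theorem lemma3p5:
  fixes m :: nat and l :: real
  assumes "m \<ge> 2" and "l > - 1/2"
  shows "real (m - 1) * real m ^ 2 * real (m + 1) * (real m + l) ^ 2 * (real m + l + 1) ^ 2
           / (2 * (2*l + 1) * (2*l + 5)) \<le> A l 2 m \<and>
         A l 2 m \<le> real (m - 1) * real m * real (m + 1) ^ 2 * (real m + l) ^ 2
           * (real m + l + 1) * (real m + l + 2) / (2 * (2*l + 1) * (2*l + 5))"
proof -
  have m: "real m \<ge> 2" "real (m - 1) = real m - 1" "real (m + 1) = real m + 1"
    using assms(1) by auto
  show ?thesis
    unfolding m(2,3) A_1_2_closed_form[OF assms(2), THEN conjunct2]
    using A2_bounds[OF assms(2) m(1)] by (rule conjI)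
qed

end
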